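(* Let $\mathbf{x}=x_1x_2\ldots$ be an infinite word over a finite alphabet. The following statements are equivalent: (i) $\mathbf{x}$ is a Sturmian word; (ii) $r(n,\mathbf{x})\le 2n+1$ for all $n\ge1$, with equality for infinitely many $n$.
   Context: For integers $i\le j$, $x_i^j=x_ix_{i+1}\cdots x_j$. For $n\ge1$, $r(n,\mathbf{x})=\min\{m\ge1:\ x_i^{i+n-1}=x_{m-n+1}^{m}\text{ for some } 1\le i\le m-n\}$. The subword complexity $p(n,\mathbf{x})$ is the number of distinct factors of length $n$ of $\mathbf{x}$; a Sturmian word is an infinite word with $p(n,\mathbf{x})=n+1$ for every $n\ge1$. *)

theory Defs
  imports Main
begin

text \<open>An infinite word x = x_1 x_2 ... is modelled as a function nat => 'a;
  only positions >= 1 are used (position 0 is ignored).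
  fac x i n is the factor x_i^{i+n-1} = x_i x_{i+1} ... x_{i+n-1} (length n).\<close>

definition fac :: "(nat \<Rightarrow> 'a) \<Rightarrow> nat \<Rightarrow> nat \<Rightarrow> 'a list" where
  "fac x i n = map (\<lambda>k. x (i + k)) [0..<n]"

definition rec_fn :: "nat \<Rightarrow> (nat \<Rightarrow> 'a) \<Rightarrow> nat" where
  "rec_fn n x = (LEAST m. 1 \<le> m \<and>
      (\<exists>i. 1 \<le> i \<and> i + n \<le> m \<and> fac x i n = fac x (m - n + 1) n))"

definition subword_complexity :: "nat \<Rightarrow> (nat \<Rightarrow> 'a) \<Rightarrow> nat" where
  "subword_complexity n x = card {fac x i n | i. 1 \<le> i}"

definition sturmian :: "(nat \<Rightarrow> 'a) \<Rightarrow> bool" where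
  "sturmian x \<longleftrightarrow> (\<forall>n\<ge>1. subword_complexity n x = n + 1)"

end

theory Submission
  imports Defs "HOL-Library.Infinite_Set"
begin

text \<open>Let s(n) be the first position at which a factor of length n repeats an earlier
  factor, so that r(n, x) = s(n) + n - 1 and (ii) says s(n) \<le> n + 2 with equality infinitely
  often. The sequence s(n) is nondecreasing, and by the theorem of Fine and Wilf it can only
  increase in large steps: s(n) < s(n + 1) implies s(n + 1) \<ge> n + 3.

  If x is Sturmian, pigeonhole gives s(n) \<le> p(n) + 1 = n + 2. Were s(n) < n + 2 from some
  point on, s(n) could no longer jump, hence would be eventually constant, which makes x
  eventually periodic and its complexity bounded.

  Conversely, under (ii) s(n) is unbounded, so x is not eventually periodic and its complexity
  is strictly increasing (Morse and Hedlund), whence p(n) \<ge> n + 1. Whenever s(n) = n + 2, every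
  factor of length n already occurs at one of the positions 1, ..., n + 1, so p(n) \<le> n + 1 for
  infinitely many n, and therefore for all n.\<close>

section \<open>Factors and first repetitions\<close>

definition first_repeat :: "(nat \<Rightarrow> 'a) \<Rightarrow> nat \<Rightarrow> nat" where
  "first_repeat x n = (LEAST s. \<exists>i. 1 \<le> i \<and> i < s \<and> fac x i n = fac x s n)"

lemma fac_eq_iff: "fac x i n = fac x j n \<longleftrightarrow> (\<forall>k<n. x (i + k) = x (j + k))"
  unfolding fac_def by (auto simp: map_eq_conv)

lemma fac_0 [simp]: "fac x i 0 = []"
  by (simp add: fac_def)

lemma fac_Suc: "fac x i (Suc n) = fac x i n @ [x (i + n)]"
  by (simp add: fac_def)

lemma fac_Suc_Cons: "fac x i (Suc n) = x i # fac x (Suc i) n"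
  by (simp add: fac_def map_upt_Suc del: upt_Suc)

lemma take_fac: "k \<le> n \<Longrightarrow> take k (fac x i n) = fac x i k"
  by (simp add: fac_def take_map min_def)

lemma finite_factors: "finite {fac (x :: nat \<Rightarrow> 'a::finite) i n | i. 1 \<le> i}"
proof (rule finite_subset)
  show "{fac x i n | i. 1 \<le> i} \<subseteq> {xs. set xs \<subseteq> UNIV \<and> length xs = n}"
    by (auto simp: fac_def)
  show "finite {xs :: 'a list. set xs \<subseteq> UNIV \<and> length xs = n}"
    by (rule finite_lists_length_eq) simp
qed

lemma repeat_within_complexity:
  fixes x :: "nat \<Rightarrow> 'a::finite"
  obtains a b where "1 \<le> a" "a < b" "b \<le> subword_complexity n x + 1" "fac x a n = fac x b n"
proof -
  let ?p = "subword_complexity n x"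
  have "\<not> inj_on (\<lambda>t. fac x t n) {1..?p + 1}"
  proof
    assume "inj_on (\<lambda>t. fac x t n) {1..?p + 1}"
    then have "card {1..?p + 1} \<le> ?p"
      unfolding subword_complexity_def by (rule card_inj_on_le[OF _ _ finite_factors]) auto
    then show False by simp
  qed
  then obtain a b where "a \<in> {1..?p + 1}" "b \<in> {1..?p + 1}" "a \<noteq> b" "fac x a n = fac x b n"
    unfolding inj_on_def by blast
  then show thesis using that[of a b] that[of b a] by (cases "a < b") auto
qed

lemma first_repeat_le:
  assumes "1 \<le> a" "a < b" "fac x a n = fac x b n"
  shows "first_repeat x n \<le> b"
  unfolding first_repeat_def using assms by (intro Least_le) blast

lemma first_repeat_le_complexity:
  fixes x :: "nat \<Rightarrow> 'a::finite"
  shows "first_repeat x n \<le> subword_complexity n x + 1"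
  by (rule repeat_within_complexity[of n x]) (use first_repeat_le order_trans in blast)

lemma first_repeat_occurs_earlier:
  fixes x :: "nat \<Rightarrow> 'a::finite"
  obtains i where "1 \<le> i" "i < first_repeat x n" "fac x i n = fac x (first_repeat x n) n"
proof -
  obtain a b where "1 \<le> a" "a < b" "fac x a n = fac x b n"
    by (rule repeat_within_complexity)
  then have "\<exists>s i. 1 \<le> i \<and> i < s \<and> fac x i n = fac x s n" by blast
  from LeastI_ex[OF this] show thesis using that unfolding first_repeat_def by blast
qed

lemma two_le_first_repeat: "2 \<le> first_repeat (x :: nat \<Rightarrow> 'a::finite) n"
  by (rule first_repeat_occurs_earlier[of x n]) simp

lemma first_repeat_0: "first_repeat (x :: nat \<Rightarrow> 'a::finite) 0 = 2"
  using first_repeat_le[of 1 2 x 0] two_le_first_repeat[of x 0] by simp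

lemma rec_fn_eq_first_repeat:
  fixes x :: "nat \<Rightarrow> 'a::finite"
  shows "rec_fn n x = first_repeat x n + n - 1"
  unfolding rec_fn_def
proof (rule Least_equality)
  obtain i where "1 \<le> i" "i < first_repeat x n" "fac x i n = fac x (first_repeat x n) n"
    by (rule first_repeat_occurs_earlier)
  then show "1 \<le> first_repeat x n + n - 1 \<and> (\<exists>i. 1 \<le> i \<and> i + n \<le> first_repeat x n + n - 1
      \<and> fac x i n = fac x (first_repeat x n + n - 1 - n + 1) n)"
    by (intro conjI exI[of _ i]) auto
next
  fix m
  assume "1 \<le> m \<and> (\<exists>i. 1 \<le> i \<and> i + n \<le> m \<and> fac x i n = fac x (m - n + 1) n)"
  then obtain i where "1 \<le> i" "i + n \<le> m" "fac x i n = fac x (m - n + 1) n" by blast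
  moreover from this have "i < m - n + 1" by linarith
  ultimately have "first_repeat x n \<le> m - n + 1" by (intro first_repeat_le)
  with \<open>i + n \<le> m\<close> show "first_repeat x n + n - 1 \<le> m" by linarith
qed

lemma first_repeat_mono:
  fixes x :: "nat \<Rightarrow> 'a::finite"
  assumes "m \<le> n"
  shows "first_repeat x m \<le> first_repeat x n"
proof -
  obtain i where "1 \<le> i" "i < first_repeat x n" "fac x i n = fac x (first_repeat x n) n"
    by (rule first_repeat_occurs_earlier)
  moreover from this(3) have "fac x i m = fac x (first_repeat x n) m"
    using assms by (auto simp: fac_eq_iff)
  ultimately show ?thesis by (intro first_repeat_le)
qed

section \<open>Periods and the theorem of Fine and Wilf\<close>

definition periodic_on :: "(nat \<Rightarrow> 'a) \<Rightarrow> nat \<Rightarrow> nat \<Rightarrow> nat \<Rightarrow> bool" where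
  "periodic_on x a b q \<longleftrightarrow> (\<forall>l. a \<le> l \<longrightarrow> l + q \<le> b \<longrightarrow> x l = x (l + q))"

lemma periodic_on_subinterval:
  "periodic_on x a b p \<Longrightarrow> a \<le> a' \<Longrightarrow> b' \<le> b \<Longrightarrow> periodic_on x a' b' p"
  unfolding periodic_on_def by auto

lemma periodic_on_iterate:
  assumes "periodic_on x a b p" "a \<le> u" "u + k * p \<le> b"
  shows "x (u + k * p) = x u"
  using assms(3)
proof (induction k)
  case (Suc k)
  then have "x (u + k * p + p) = x (u + k * p)"
    using assms(1,2) unfolding periodic_on_def by auto
  with Suc show ?case by (simp add: algebra_simps)
qed simp

lemma periodic_on_mod_eq:
  assumes "periodic_on x a b p" "a \<le> u" "a \<le> v" "u \<le> b" "v \<le> b" "u mod p = v mod p"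
  shows "x u = x v"
proof -
  have ordered: "x u = x v" if uv: "u \<le> v" "a \<le> u" "v \<le> b" "u mod p = v mod p" for u v
  proof -
    obtain k where "v - u = p * k"
      using mod_eq_dvd_iff_nat[OF uv(1), THEN iffD1, OF uv(4)[symmetric]] by (rule dvdE)
    then have "v = u + k * p" using uv(1) by (simp add: mult.commute)
    then show ?thesis using periodic_on_iterate[OF assms(1) uv(2)] uv(3) by simp
  qed
  show ?thesis
  proof (cases "u \<le> v")
    case True then show ?thesis using assms(2-6) by (intro ordered)
  next
    case False then show ?thesis using assms(2-6) ordered[of v u] by simp
  qed
qed

lemma periodic_on_of_fac_eq:
  assumes "fac x i n = fac x j n" "1 \<le> i" "i \<le> j"
  shows "periodic_on x i (j + n - 1) (j - i)"
  unfolding periodic_on_def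
proof (intro allI impI)
  fix l assume l: "i \<le> l" "l + (j - i) \<le> j + n - 1"
  then have "l - i < n" using assms(2,3) by linarith
  then have "x (i + (l - i)) = x (j + (l - i))" using assms(1) by (simp add: fac_eq_iff)
  moreover have "i + (l - i) = l" "j + (l - i) = l + (j - i)" using l(1) assms(3) by simp_all
  ultimately show "x l = x (l + (j - i))" by simp
qed

lemma mod_eq_in_window:
  fixes y c p :: nat
  assumes "0 < p"
  obtains r where "c \<le> r" "r < c + p" "r mod p = y mod p"
proof
  show "c \<le> c + (y + p * c - c) mod p" "c + (y + p * c - c) mod p < c + p"
    using assms by simp_all
  have "c \<le> p * c" using assms by simp
  then have "c + (y + p * c - c) = y + p * c" by linarith
  then have "(c + (y + p * c - c) mod p) mod p = (y + p * c) mod p"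
    by (metis mod_add_right_eq)
  then show "(c + (y + p * c - c) mod p) mod p = y mod p" by simp
qed

text \<open>Both ends of a d-step are moved into the window by multiples of p.\<close>

lemma periodic_on_extend:
  assumes per_p: "periodic_on x a b p" and per_d: "periodic_on x c e d"
    and "a \<le> c" "e \<le> b" "c + p \<le> e + 1" "d dvd p" "0 < p"
  shows "periodic_on x a b d"
  unfolding periodic_on_def
proof (intro allI impI)
  fix l assume l: "a \<le> l" "l + d \<le> b"
  obtain r where r: "c \<le> r" "r < c + p" "r mod p = l mod p"
    using mod_eq_in_window \<open>0 < p\<close> by blast
  obtain r' where r': "c \<le> r'" "r' < c + p" "r' mod p = (l + d) mod p"
    using mod_eq_in_window \<open>0 < p\<close> by blast
  have "r mod d = r' mod d"
    using r(3) r'(3) \<open>d dvd p\<close> by (metis mod_mod_cancel mod_add_self2)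
  have "x l = x r"
    by (rule periodic_on_mod_eq[OF per_p]) (use l r assms(3-5) in auto)
  also have "\<dots> = x r'"
    by (rule periodic_on_mod_eq[OF per_d]) (use r r' \<open>r mod d = r' mod d\<close> assms(5) in auto)
  also have "\<dots> = x (l + d)"
    by (rule periodic_on_mod_eq[OF per_p]) (use l r' assms(3-5) in auto)
  finally show "x l = x (l + d)" .
qed

lemma periodic_on_diff:
  assumes "periodic_on x c e p" "periodic_on x c e q" "p < q"
  shows "periodic_on x c (e - p) (q - p)"
  unfolding periodic_on_def
proof (intro allI impI)
  fix l assume l: "c \<le> l" "l + (q - p) \<le> e - p"
  have "l + (q - p) + p = l + q" using assms(3) by simp
  moreover have "l + q \<le> e" using l assms(3) by linarith
  ultimately have "x (l + (q - p)) = x (l + q)"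
    using assms(1) l(1) unfolding periodic_on_def by (metis le_add1 order_trans)
  moreover have "x l = x (l + q)"
    using assms(2) l(1) \<open>l + q \<le> e\<close> unfolding periodic_on_def by blast
  ultimately show "x l = x (l + (q - p))" by simp
qed

lemma fine_wilf:
  assumes "0 < p" "0 < q" "c + p + q \<le> e + 2" "periodic_on x c e p" "periodic_on x c e q"
  shows "periodic_on x c e (gcd p q)"
  using assms
proof (induction "p + q" arbitrary: p q e rule: less_induct)
  case less
  have step: "periodic_on x c e (gcd p' q')"
    if "p' < q'" "p' + q' = p + q" "0 < p'" "c + p' + q' \<le> e + 2"
      "periodic_on x c e p'" "periodic_on x c e q'" for p' q'
  proof -
    have "periodic_on x c (e - p') p'"
      using that(5) by (rule periodic_on_subinterval) simp_all
    moreover have "periodic_on x c (e - p') (q' - p')"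
      using that(5,6,1) by (rule periodic_on_diff)
    ultimately have "periodic_on x c (e - p') (gcd p' (q' - p'))"
      using that(1-4) by (intro less.hyps) auto
    then have "periodic_on x c (e - p') (gcd p' q')"
      using that(1) by (metis gcd.commute gcd_diff1_nat less_imp_le)
    then show ?thesis by (rule periodic_on_extend[OF that(5)]) (use that in auto)
  qed
  consider "p = q" | "p < q" | "q < p" by linarith
  then show ?case
  proof cases
    case 1 with less.prems show ?thesis by simp
  next
    case 2 with less.prems show ?thesis by (intro step) auto
  next
    case 3 with less.prems show ?thesis using step[of q p] by (simp add: gcd.commute add.commute)
  qed
qed

section \<open>Growth of first repetitions\<close>

text \<open>If the first repetition moved from s to some s' \<le> m + 2, the occurrences witnessing it
  would give x the periods s - i and s' - j on overlapping intervals long enough for Fine and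
  Wilf; their gcd, a divisor of s - i, would then also produce the forbidden repetition of
  length m + 1 at s.\<close>

lemma first_repeat_jump:
  fixes x :: "nat \<Rightarrow> 'a::finite"
  assumes "first_repeat x m < first_repeat x (Suc m)"
  shows "m + 3 \<le> first_repeat x (Suc m)"
proof (rule ccontr)
  define s s' where "s = first_repeat x m" and "s' = first_repeat x (Suc m)"
  assume "\<not> m + 3 \<le> first_repeat x (Suc m)"
  then have s'_le: "s' \<le> m + 2" unfolding s'_def by simp
  have "s < s'" using assms unfolding s_def s'_def .
  obtain i where i: "1 \<le> i" "i < s" "fac x i m = fac x s m"
    unfolding s_def by (rule first_repeat_occurs_earlier)
  obtain j where j: "1 \<le> j" "j < s'" "fac x j (Suc m) = fac x s' (Suc m)"
    unfolding s'_def by (rule first_repeat_occurs_earlier)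
  have new: "x (i + m) \<noteq> x (s + m)"
  proof
    assume "x (i + m) = x (s + m)"
    with i have "fac x i (Suc m) = fac x s (Suc m)" by (simp add: fac_Suc)
    with i have "s' \<le> s" unfolding s'_def by (intro first_repeat_le)
    with \<open>s < s'\<close> show False by simp
  qed
  define p q where "p = s' - j" and "q = s - i"
  define c e where "c = max i j" and "e = s + m - 1"
  have per_q: "periodic_on x i e q"
    using periodic_on_of_fac_eq[OF i(3,1)] i(2) unfolding e_def q_def by simp
  have per_p: "periodic_on x j (s' + m) p"
    using periodic_on_of_fac_eq[OF j(3,1)] j(2) unfolding p_def by simp
  have window: "c + p + q \<le> e + 2"
    using s'_le i j \<open>s < s'\<close> unfolding c_def e_def p_def q_def by linarith
  have "periodic_on x c e (gcd p q)"
  proof (rule fine_wilf)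
    show "periodic_on x c e p"
      using per_p by (rule periodic_on_subinterval) (use \<open>s < s'\<close> in \<open>auto simp: c_def e_def\<close>)
    show "periodic_on x c e q"
      using per_q by (rule periodic_on_subinterval) (auto simp: c_def)
  qed (use i j window in \<open>auto simp: p_def q_def\<close>)
  moreover have "j \<le> c" "e \<le> s' + m" "c + p \<le> e + 1" "0 < p"
    using window \<open>s < s'\<close> i j unfolding c_def e_def p_def q_def by auto
  ultimately have per_gcd: "periodic_on x j (s' + m) (gcd p q)"
    by (intro periodic_on_extend[OF per_p]) simp_all
  have "x (i + m + q div gcd p q * gcd p q) = x (i + m)"
    by (rule periodic_on_iterate[OF per_gcd]) (use i j s'_le \<open>s < s'\<close> in \<open>auto simp: q_def\<close>)
  moreover have "i + m + q div gcd p q * gcd p q = s + m"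
    using i(2) unfolding q_def by simp
  ultimately show False using new by metis
qed

text \<open>A factor of length n at t > n + 1 lies inside the factor of some length m \<ge> n starting at
  s(m) \<le> t, which occurred earlier; shifting back to that occurrence decreases t.\<close>

lemma factor_occurs_in_prefix:
  fixes x :: "nat \<Rightarrow> 'a::finite"
  assumes le: "\<forall>m. first_repeat x m \<le> m + 2" and eq: "first_repeat x n = n + 2"
    and unbounded: "\<forall>t. \<exists>m. t < first_repeat x m"
  shows "1 \<le> t \<Longrightarrow> \<exists>j\<in>{1..n + 1}. fac x t n = fac x j n"
proof (induction t rule: less_induct)
  case (less t)
  show ?case
  proof (cases "t \<le> n + 1")
    case True with less.prems show ?thesis by auto
  next
    case False
    obtain M where "t < first_repeat x M" using unbounded by blast
    moreover have "\<not> t < first_repeat x 0" using False by (simp add: first_repeat_0)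
    ultimately obtain m where m: "first_repeat x m \<le> t" "t < first_repeat x (Suc m)"
      using ex_least_nat_less[of "\<lambda>M. t < first_repeat x M"] by (auto simp: not_less)
    define s where "s = first_repeat x m"
    have "n \<le> m"
    proof (rule ccontr)
      assume "\<not> n \<le> m"
      then have "first_repeat x (Suc m) \<le> first_repeat x n" by (intro first_repeat_mono) simp
      with m False eq show False by simp
    qed
    then have "n + 2 \<le> s" using first_repeat_mono eq unfolding s_def by metis
    have "t \<le> m + 2" using m(2) le[rule_format, of "Suc m"] by simp
    obtain i where i: "1 \<le> i" "i < s" "fac x i m = fac x s m"
      unfolding s_def by (rule first_repeat_occurs_earlier)
    define t' where "t' = t - (s - i)"
    have "fac x t n = fac x t' n"
      unfolding fac_eq_iff
    proof (intro allI impI)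
      fix k assume "k < n"
      then have "t - s + k < m"
        using \<open>t \<le> m + 2\<close> \<open>n + 2 \<le> s\<close> m(1) s_def by linarith
      then have "x (i + (t - s + k)) = x (s + (t - s + k))" using i(3) by (simp add: fac_eq_iff)
      moreover have "i + (t - s + k) = t' + k" "s + (t - s + k) = t + k"
        using i(2) m(1) unfolding s_def t'_def by auto
      ultimately show "x (t + k) = x (t' + k)" by simp
    qed
    moreover have "\<exists>j\<in>{1..n + 1}. fac x t' n = fac x j n"
      using i m(1) unfolding s_def t'_def by (intro less.IH) auto
    ultimately show ?thesis by simp
  qed
qed

lemma complexity_le_if_first_repeat_eq:
  fixes x :: "nat \<Rightarrow> 'a::finite"
  assumes "\<forall>m. first_repeat x m \<le> m + 2" "first_repeat x n = n + 2"
    and "\<forall>t. \<exists>m. t < first_repeat x m"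
  shows "subword_complexity n x \<le> n + 1"
proof -
  have "{fac x t n | t. 1 \<le> t} \<subseteq> (\<lambda>j. fac x j n) ` {1..n + 1}"
    using factor_occurs_in_prefix[OF assms] by fastforce
  then have "card {fac x t n | t. 1 \<le> t} \<le> card {1..n + 1}"
    by (intro surj_card_le) simp_all
  then show ?thesis unfolding subword_complexity_def by simp
qed

section \<open>Eventually periodic words\<close>

definition eventually_periodic :: "(nat \<Rightarrow> 'a) \<Rightarrow> bool" where
  "eventually_periodic x \<longleftrightarrow> (\<exists>i q. 1 \<le> i \<and> 0 < q \<and> (\<forall>l\<ge>i. x (l + q) = x l))"

lemma eventually_periodic_complexity_bounded:
  assumes "eventually_periodic x"
  obtains C where "\<And>n. subword_complexity n x \<le> C"
proof -
  obtain i q where iq: "1 \<le> i" "0 < q" "\<forall>l\<ge>i. x (l + q) = x l"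
    using assms unfolding eventually_periodic_def by blast
  have "\<exists>t'\<in>{1..<i + q}. fac x t n = fac x t' n" if "1 \<le> t" for t n
    using that
  proof (induction t rule: less_induct)
    case (less t)
    show ?case
    proof (cases "t < i + q")
      case True with less.prems show ?thesis by auto
    next
      case False
      have "fac x t n = fac x (t - q) n"
        unfolding fac_eq_iff
      proof (intro allI impI)
        fix k
        have "i \<le> t - q + k" using False by simp
        then have "x (t - q + k + q) = x (t - q + k)" using iq(3) by blast
        moreover have "t - q + k + q = t + k" using False by simp
        ultimately show "x (t + k) = x (t - q + k)" by metis
      qed
      moreover have "\<exists>t'\<in>{1..<i + q}. fac x (t - q) n = fac x t' n"
        using False iq(1,2) by (intro less.IH) auto
      ultimately show ?thesis by simp
    qed
  qed
  then have "{fac x t n | t. 1 \<le> t} \<subseteq> (\<lambda>t'. fac x t' n) ` {1..<i + q}" for n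
    by fastforce
  then have "subword_complexity n x \<le> card {1..<i + q}" for n
    unfolding subword_complexity_def by (intro surj_card_le) simp_all
  then show thesis by (rule that)
qed

lemma eventually_periodic_first_repeat_bounded:
  assumes "eventually_periodic x"
  obtains C where "\<And>n. first_repeat x n \<le> C"
proof -
  obtain i q where iq: "1 \<le> i" "0 < q" "\<forall>l\<ge>i. x (l + q) = x l"
    using assms unfolding eventually_periodic_def by blast
  then have shift: "fac x i n = fac x (i + q) n" for n
    unfolding fac_eq_iff
  proof (intro allI impI)
    fix k
    have "x (i + k + q) = x (i + k)" using iq(3) by simp
    then show "x (i + k) = x (i + q + k)" by (simp add: ac_simps)
  qed
  have "first_repeat x n \<le> i + q" for n
    by (rule first_repeat_le[OF iq(1) _ shift]) (use iq(2) in simp)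
  then show thesis by (rule that)
qed

lemma eventually_periodic_if_first_repeat_eventually_const:
  fixes x :: "nat \<Rightarrow> 'a::finite"
  assumes const: "\<forall>m\<ge>N. first_repeat x m = s"
  shows "eventually_periodic x"
proof (rule ccontr)
  assume not_periodic: "\<not> eventually_periodic x"
  have "\<exists>l. x (i + l) \<noteq> x (s + l)" if "i \<in> {1..<s}" for i
  proof (rule ccontr)
    assume "\<not> (\<exists>l. x (i + l) \<noteq> x (s + l))"
    then have "x (i + (l - i)) = x (s + (l - i))" for l by blast
    moreover have "i + (l - i) = l" "s + (l - i) = l + (s - i)" if "i \<le> l" for l
      using that \<open>i \<in> {1..<s}\<close> by auto
    ultimately have "\<forall>l\<ge>i. x (l + (s - i)) = x l" by metis
    moreover have "1 \<le> i" "0 < s - i" using that by auto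
    ultimately have "eventually_periodic x" unfolding eventually_periodic_def by blast
    with not_periodic show False by blast
  qed
  then obtain f where f: "\<forall>i\<in>{1..<s}. x (i + f i) \<noteq> x (s + f i)" by metis
  define M where "M = N + (\<Sum>i\<in>{1..<s}. f i) + 1"
  have "first_repeat x M = s" using const unfolding M_def by simp
  then obtain i where i: "1 \<le> i" "i < s" "fac x i M = fac x s M"
    by (metis first_repeat_occurs_earlier)
  then have "f i \<le> (\<Sum>i\<in>{1..<s}. f i)" by (intro member_le_sum) auto
  then have "x (i + f i) = x (s + f i)" using i(3) unfolding M_def by (simp add: fac_eq_iff)
  with f i show False by auto
qed

text \<open>Morse and Hedlund: if every factor of length k had a unique right extension, a repeated
  factor of length k would force the same continuation at both occurrences forever.\<close>

lemma complexity_less_Suc: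
  fixes x :: "nat \<Rightarrow> 'a::finite"
  assumes "\<not> eventually_periodic x"
  shows "subword_complexity k x < subword_complexity (Suc k) x"
proof (rule ccontr)
  let ?F = "\<lambda>n. {fac x i n | i. 1 \<le> i}"
  assume "\<not> ?thesis"
  then have "card (?F (Suc k)) \<le> card (?F k)" unfolding subword_complexity_def by simp
  moreover have "take k ` ?F (Suc k) = ?F k"
    by (auto simp: take_fac image_iff) (metis le_SucI order_refl take_fac)
  moreover have "card (take k ` ?F (Suc k)) \<le> card (?F (Suc k))"
    by (rule card_image_le) (rule finite_factors)
  ultimately have "inj_on (take k) (?F (Suc k))"
    by (intro eq_card_imp_inj_on finite_factors) simp
  then have extend: "fac x a (Suc k) = fac x b (Suc k)"
    if "1 \<le> a" "1 \<le> b" "fac x a k = fac x b k" for a b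
    by (rule inj_onD) (use that in \<open>auto simp: take_fac\<close>)
  obtain a b where ab: "1 \<le> a" "a < b" "fac x a k = fac x b k"
    by (rule repeat_within_complexity)
  have "fac x (a + l) (Suc k) = fac x (b + l) (Suc k)" for l
  proof (induction l)
    case 0
    show ?case using ab by (intro extend) simp_all
  next
    case (Suc l)
    then have "fac x (Suc (a + l)) k = fac x (Suc (b + l)) k" by (simp add: fac_Suc_Cons)
    then show ?case using ab by (intro extend) simp_all
  qed
  then have same: "x (a + l) = x (b + l)" for l by (simp add: fac_Suc_Cons)
  have "x (l + (b - a)) = x l" if "a \<le> l" for l
  proof -
    have "a + (l - a) = l" "b + (l - a) = l + (b - a)" using that ab(2) by auto
    then show ?thesis using same[of "l - a"] by simp
  qed
  moreover have "0 < b - a" using ab(2) by simp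
  ultimately have "eventually_periodic x" unfolding eventually_periodic_def using ab(1) by blast
  with assms show False by blast
qed

lemma complexity_0: "subword_complexity 0 x = 1"
proof -
  have "{fac x i 0 | i. 1 \<le> i} = {[]}" by auto
  then show ?thesis unfolding subword_complexity_def by simp
qed

lemma complexity_add_le:
  fixes x :: "nat \<Rightarrow> 'a::finite"
  assumes "\<not> eventually_periodic x" "m \<le> n"
  shows "subword_complexity m x + (n - m) \<le> subword_complexity n x"
  using assms(2)
proof (induction n rule: dec_induct)
  case (step n)
  with complexity_less_Suc[OF assms(1), of n] show ?case by simp
qed simp

section \<open>Sturmian words\<close>

lemma sturmian_complexity: "sturmian x \<Longrightarrow> subword_complexity n x = n + 1"
  unfolding sturmian_def by (cases n) (simp_all add: complexity_0)

lemma infinite_first_repeat_eq_if_sturmian: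
  fixes x :: "nat \<Rightarrow> 'a::finite"
  assumes "sturmian x"
  shows "infinite {n. first_repeat x n = n + 2}"
  unfolding infinite_nat_iff_unbounded_le
proof (rule ccontr)
  assume "\<not> (\<forall>m. \<exists>n\<ge>m. n \<in> {n. first_repeat x n = n + 2})"
  then obtain N where N: "\<And>n. N \<le> n \<Longrightarrow> first_repeat x n \<noteq> n + 2" by auto
  have below: "first_repeat x n \<le> n + 1" if "N \<le> n" for n
    using first_repeat_le_complexity[of x n] sturmian_complexity[OF assms, of n] N[OF that]
    by simp
  have "first_repeat x n = first_repeat x N" if "N \<le> n" for n
    using that
  proof (induction n rule: dec_induct)
    case (step n)
    have "\<not> first_repeat x n < first_repeat x (Suc n)"
      using first_repeat_jump[of x n] below[of "Suc n"] step.hyps by linarith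
    with first_repeat_mono[of n "Suc n" x] step.IH show ?case by simp
  qed simp
  then have "eventually_periodic x"
    by (intro eventually_periodic_if_first_repeat_eventually_const) blast
  then obtain C where "\<And>n. subword_complexity n x \<le> C"
    using eventually_periodic_complexity_bounded by blast
  then have "subword_complexity C x \<le> C" .
  with sturmian_complexity[OF assms, of C] show False by simp
qed

lemma sturmian_if_first_repeat:
  fixes x :: "nat \<Rightarrow> 'a::finite"
  assumes le: "\<forall>n. first_repeat x n \<le> n + 2"
    and inf: "infinite {n. first_repeat x n = n + 2}"
  shows "sturmian x"
proof -
  have eq: "\<exists>n'>n. first_repeat x n' = n' + 2" for n
    using inf by (simp add: infinite_nat_iff_unbounded)
  have unbounded: "\<forall>t. \<exists>m. t < first_repeat x m"
  proof
    fix t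
    obtain n' where "t < n'" "first_repeat x n' = n' + 2" using eq by blast
    then show "\<exists>m. t < first_repeat x m" by (intro exI[of _ n']) simp
  qed
  have not_periodic: "\<not> eventually_periodic x"
  proof
    assume "eventually_periodic x"
    then obtain C where "\<And>n. first_repeat x n \<le> C"
      using eventually_periodic_first_repeat_bounded by blast
    with unbounded show False by (meson not_le)
  qed
  show ?thesis unfolding sturmian_def
  proof (intro allI impI)
    fix n :: nat
    obtain n' where n': "n < n'" "first_repeat x n' = n' + 2" using eq by blast
    have "subword_complexity n' x \<le> n' + 1"
      using le n'(2) unbounded by (rule complexity_le_if_first_repeat_eq)
    moreover have "subword_complexity n x + (n' - n) \<le> subword_complexity n' x"
      using not_periodic n'(1) by (intro complexity_add_le) simp_all
    moreover have "subword_complexity 0 x + (n - 0) \<le> subword_complexity n x"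
      using not_periodic by (intro complexity_add_le) simp_all
    ultimately show "subword_complexity n x = n + 1" using n'(1) by (simp add: complexity_0)
  qed
qed

lemma sturmian_iff_first_repeat:
  fixes x :: "nat \<Rightarrow> 'a::finite"
  shows "sturmian x \<longleftrightarrow>
    (\<forall>n. first_repeat x n \<le> n + 2) \<and> infinite {n. first_repeat x n = n + 2}"
proof
  assume st: "sturmian x"
  have "first_repeat x n \<le> n + 2" for n
    using first_repeat_le_complexity[of x n] sturmian_complexity[OF st, of n] by simp
  with infinite_first_repeat_eq_if_sturmian[OF st]
  show "(\<forall>n. first_repeat x n \<le> n + 2) \<and> infinite {n. first_repeat x n = n + 2}" by blast
qed (use sturmian_if_first_repeat in blast)

theorem theorem2p4:
  fixes x :: "nat \<Rightarrow> 'a::finite"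
  shows "sturmian x \<longleftrightarrow>
    ((\<forall>n\<ge>1. rec_fn n x \<le> 2 * n + 1) \<and> infinite {n. 1 \<le> n \<and> rec_fn n x = 2 * n + 1})"
proof -
  have "rec_fn n x \<le> 2 * n + 1 \<longleftrightarrow> first_repeat x n \<le> n + 2" for n
    using two_le_first_repeat[of x n] unfolding rec_fn_eq_first_repeat by arith
  moreover have "(\<forall>n\<ge>1. first_repeat x n \<le> n + 2) \<longleftrightarrow> (\<forall>n. first_repeat x n \<le> n + 2)"
  proof (intro iffI allI)
    fix n assume "\<forall>n\<ge>1. first_repeat x n \<le> n + 2"
    then show "first_repeat x n \<le> n + 2" using first_repeat_0[of x] by (cases n) auto
  qed simp
  moreover have "{n. 1 \<le> n \<and> rec_fn n x = 2 * n + 1} = {n. first_repeat x n = n + 2} - {0}"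
    using two_le_first_repeat[of x] unfolding rec_fn_eq_first_repeat by auto
  ultimately show ?thesis by (simp add: sturmian_iff_first_repeat)
qed

end
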